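(* For all integers $n\ge 3$ and $1<k<n$, the edge connectivity of $G=H_B(n,k)$ is $\lambda(G)=1$.
   Context: Fix integers $n\ge 2$ and $1\le k<n$ and positive real numbers $x_1<x_2<\dots<x_n$. Let $\mathscr{B}_n=\{\pm x_1,\pm x_2,\dots,\pm x_{n-1},x_n\}$ (so $-x_n\notin\mathscr{B}_n$). Let $\phi(\mathscr{B}_n)$ be the family of all nonempty subsets $S\subseteq\mathscr{B}_n$ whose elements have pairwise distinct absolute values and whose element of largest absolute value is positive. Let $\mathscr{B}_n^+=\{x_1,\dots,x_n\}$, let $V_1$ be the set of all $k$-element subsets of $\mathscr{B}_n^+$, and let $V_2=\phi(\mathscr{B}_n)\setminus V_1$. For $A\in\phi(\mathscr{B}_n)$ put $A^\dagger=\{|a|:a\in A\}$. The bipartite Kneser B type-$k$ graph $H_B(n,k)$ is the simple graph with vertex set $V_1\cup V_2$ in which $X\in V_1$ and $Y\in V_2$ are adjacent if and only if $X\subseteq Y^\dagger$ or $Y^\dagger\subseteq X$, and there are no other edges. *)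

theory Defs
  imports Complex_Main
begin

definition adj_rel :: "'a set set \<Rightarrow> ('a \<times> 'a) set" where
  "adj_rel E = {(u, v). {u, v} \<in> E \<and> u \<noteq> v}"

definition graph_connected :: "'a set \<Rightarrow> 'a set set \<Rightarrow> bool" where
  "graph_connected V E \<longleftrightarrow> (\<forall>u\<in>V. \<forall>v\<in>V. (u, v) \<in> (adj_rel E)\<^sup>*)"

definition edge_connectivity :: "'a set \<Rightarrow> 'a set set \<Rightarrow> nat" where
  "edge_connectivity V E =
     (LEAST m. \<exists>F. F \<subseteq> E \<and> card F = m \<and> \<not> graph_connected V (E - F))"

text \<open>The points are x 1 < x 2 < ... < x n (positive reals), indexed from 1.\<close>

definition Bset :: "(nat \<Rightarrow> real) \<Rightarrow> nat \<Rightarrow> real set" where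
  "Bset x n = {x i | i. 1 \<le> i \<and> i \<le> n} \<union> {- x i | i. 1 \<le> i \<and> i \<le> n - 1}"

definition Bplus :: "(nat \<Rightarrow> real) \<Rightarrow> nat \<Rightarrow> real set" where
  "Bplus x n = {x i | i. 1 \<le> i \<and> i \<le> n}"

definition dagger :: "real set \<Rightarrow> real set" where
  "dagger A = abs ` A"

definition phiB :: "(nat \<Rightarrow> real) \<Rightarrow> nat \<Rightarrow> real set set" where
  "phiB x n = {S. S \<subseteq> Bset x n \<and> S \<noteq> {} \<and> inj_on abs S \<and>
                  (\<exists>m\<in>S. 0 < m \<and> (\<forall>a\<in>S. \<bar>a\<bar> \<le> \<bar>m\<bar>))}"

definition HB_V1 :: "(nat \<Rightarrow> real) \<Rightarrow> nat \<Rightarrow> nat \<Rightarrow> real set set" where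
  "HB_V1 x n k = {S. S \<subseteq> Bplus x n \<and> card S = k}"

definition HB_V2 :: "(nat \<Rightarrow> real) \<Rightarrow> nat \<Rightarrow> nat \<Rightarrow> real set set" where
  "HB_V2 x n k = phiB x n - HB_V1 x n k"

definition HB_vertices :: "(nat \<Rightarrow> real) \<Rightarrow> nat \<Rightarrow> nat \<Rightarrow> real set set" where
  "HB_vertices x n k = HB_V1 x n k \<union> HB_V2 x n k"

definition HB_edges :: "(nat \<Rightarrow> real) \<Rightarrow> nat \<Rightarrow> nat \<Rightarrow> real set set set" where
  "HB_edges x n k = {{X, Y} | X Y. X \<in> HB_V1 x n k \<and> Y \<in> HB_V2 x n k \<and>
                        (X \<subseteq> dagger Y \<or> dagger Y \<subseteq> X)}"

end

theory Submission
  imports Defs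
begin

text \<open>The full positive set \<open>{x\<^sub>1, \<dots>, x\<^sub>n}\<close> lies in \<open>V\<^sub>2\<close> (it has \<open>n \<noteq> k\<close> elements) and
is adjacent to every \<open>k\<close>-set, while every vertex of \<open>V\<^sub>2\<close> has some \<open>k\<close>-set as
neighbour (a \<open>k\<close>-subset or \<open>k\<close>-superset of its absolute values); so the graph is
connected.  On the other hand \<open>{-x\<^sub>1, x\<^sub>2, \<dots>, x\<^sub>k}\<close> has exactly one neighbour: its
absolute values form a \<open>k\<close>-set, and the only \<open>k\<close>-set contained in or containing
it is \<open>{x\<^sub>1, \<dots>, x\<^sub>k}\<close>.  The edge to this neighbour is a bridge.\<close>

lemma sym_adj_rel: "sym (adj_rel E)"
  unfolding adj_rel_def sym_def by (auto simp: insert_commute)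

lemma adj_relI: "{u, v} \<in> E \<Longrightarrow> u \<noteq> v \<Longrightarrow> (u, v) \<in> adj_rel E"
  unfolding adj_rel_def by simp

lemma graph_connected_if_reaches_hub:
  assumes "\<And>v. v \<in> V \<Longrightarrow> (v, c) \<in> (adj_rel E)\<^sup>*"
  shows "graph_connected V E"
proof -
  have "sym ((adj_rel E)\<^sup>*)"
    by (simp add: sym_adj_rel sym_rtrancl)
  then show ?thesis
    using assms unfolding graph_connected_def by (meson rtrancl_trans symD)
qed

lemma not_graph_connected_if_isolated:
  assumes "v \<in> V" "w \<in> V" "v \<noteq> w" and isolated: "\<And>e. e \<in> E \<Longrightarrow> v \<notin> e"
  shows "\<not> graph_connected V E"
proof
  assume "graph_connected V E"
  then have "(v, w) \<in> (adj_rel E)\<^sup>*"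
    using assms(1,2) unfolding graph_connected_def by blast
  then obtain u where "(v, u) \<in> adj_rel E"
    using \<open>v \<noteq> w\<close> by (metis converse_rtranclE)
  then show False
    using isolated unfolding adj_rel_def by auto
qed

lemma edge_connectivity_eq_1I:
  assumes "finite E" "graph_connected V E" "e \<in> E" "\<not> graph_connected V (E - {e})"
  shows "edge_connectivity V E = 1"
  unfolding edge_connectivity_def
proof (rule Least_equality)
  show "\<exists>F. F \<subseteq> E \<and> card F = 1 \<and> \<not> graph_connected V (E - F)"
    using assms(3,4) by (intro exI[of _ "{e}"]) simp
next
  fix m assume "\<exists>F. F \<subseteq> E \<and> card F = m \<and> \<not> graph_connected V (E - F)"
  then obtain F where "F \<subseteq> E" "card F = m" "\<not> graph_connected V (E - F)"
    by blast
  moreover have "finite F"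
    using \<open>F \<subseteq> E\<close> \<open>finite E\<close> by (rule finite_subset)
  ultimately show "1 \<le> m"
    using assms(2) by (cases "m = 0") auto
qed

locale kneser_B_setup =
  fixes x :: "nat \<Rightarrow> real" and n k :: nat
  assumes k_gt_1: "1 < k" and k_less_n: "k < n"
    and x_1_pos: "0 < x 1"
    and x_strict_mono: "\<And>i j. 1 \<le> i \<Longrightarrow> i < j \<Longrightarrow> j \<le> n \<Longrightarrow> x i < x j"
begin

lemma x_mono: "1 \<le> i \<Longrightarrow> i \<le> j \<Longrightarrow> j \<le> n \<Longrightarrow> x i \<le> x j"
  using x_strict_mono[of i j] by (cases "i = j") auto

lemma x_pos: "1 \<le> i \<Longrightarrow> i \<le> n \<Longrightarrow> 0 < x i"
  using x_1_pos x_mono[of 1 i] by simp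

lemma inj_on_x: "inj_on x {1..n}"
  by (rule inj_onI) (metis atLeastAtMost_iff linorder_neqE_nat less_irrefl x_strict_mono)

lemma Bplus_eq: "Bplus x n = x ` {1..n}"
  unfolding Bplus_def by auto

lemma Bset_eq: "Bset x n = Bplus x n \<union> uminus ` x ` {1..n-1}"
  unfolding Bset_def Bplus_eq by auto

lemma finite_Bplus: "finite (Bplus x n)"
  by (simp add: Bplus_eq)

lemma card_Bplus: "card (Bplus x n) = n"
  using inj_on_x by (simp add: Bplus_eq card_image)

lemma Bplus_pos: "a \<in> Bplus x n \<Longrightarrow> 0 < a"
  using x_pos by (auto simp: Bplus_eq)

lemma dagger_subset_Bplus:
  assumes "Y \<in> phiB x n"
  shows "dagger Y \<subseteq> Bplus x n"
proof
  fix b assume "b \<in> dagger Y"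
  then obtain a where "a \<in> Y" and b: "b = \<bar>a\<bar>"
    unfolding dagger_def by blast
  moreover have "Y \<subseteq> Bplus x n \<union> uminus ` x ` {1..n-1}"
    using assms unfolding phiB_def Bset_eq by blast
  ultimately consider "a \<in> Bplus x n" | i where "i \<in> {1..n-1}" "a = - x i"
    by blast
  then show "b \<in> Bplus x n"
  proof cases
    case 1
    then show ?thesis
      using Bplus_pos[OF 1] b by simp
  next
    case (2 i)
    then have "i \<in> {1..n}" "0 < x i"
      using x_pos[of i] by auto
    then show ?thesis
      using 2 b by (auto simp: Bplus_eq)
  qed
qed

lemma dagger_id:
  assumes "A \<subseteq> Bplus x n"
  shows "dagger A = A"
proof -
  have "abs ` A = id ` A"
    using assms by (intro image_cong) (auto intro!: abs_of_pos Bplus_pos)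
  then show ?thesis
    by (simp add: dagger_def)
qed

lemma phiB_memI:
  assumes "S \<subseteq> Bset x n" "inj_on abs S" "1 \<le> m" "m \<le> n" "x m \<in> S"
    and "dagger S \<subseteq> x ` {1..m}"
  shows "S \<in> phiB x n"
proof -
  have "\<bar>a\<bar> \<le> \<bar>x m\<bar>" if "a \<in> S" for a
  proof -
    obtain i where "i \<in> {1..m}" "\<bar>a\<bar> = x i"
      using assms(6) \<open>a \<in> S\<close> unfolding dagger_def by blast
    then show ?thesis
      using x_mono[of i m] x_pos[of m] assms(4) by simp
  qed
  then show ?thesis
    using assms x_pos[of m] unfolding phiB_def by blast
qed

lemma finite_HB_edges: "finite (HB_edges x n k)"
proof -
  have "HB_vertices x n k \<subseteq> Pow (Bset x n)"
    unfolding HB_vertices_def HB_V2_def HB_V1_def phiB_def Bset_eq by blast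
  then have "finite (HB_vertices x n k)"
    using finite_Bplus by (simp add: Bset_eq finite_subset)
  moreover have "HB_edges x n k \<subseteq> Pow (HB_vertices x n k)"
    unfolding HB_edges_def HB_vertices_def by blast
  ultimately show ?thesis
    by (simp add: finite_subset)
qed

lemma HB_edge_reachable:
  assumes "{X, Y} \<in> HB_edges x n k"
  shows "(X, Y) \<in> (adj_rel (HB_edges x n k))\<^sup>*"
proof -
  obtain A B where "{X, Y} = {A, B}" "A \<in> HB_V1 x n k" "B \<in> HB_V2 x n k"
    using assms unfolding HB_edges_def by blast
  then have "X \<noteq> Y"
    unfolding HB_V2_def by (metis DiffD2 doubleton_eq_iff)
  then show ?thesis
    using assms by (intro r_into_rtrancl adj_relI)
qed

lemma Bplus_in_HB_V2: "Bplus x n \<in> HB_V2 x n k"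
proof -
  have "Bplus x n \<in> phiB x n"
  proof (rule phiB_memI[where m = n])
    show "inj_on abs (Bplus x n)"
      by (rule inj_onI) (metis Bplus_pos abs_of_pos)
  qed (use k_less_n dagger_id in \<open>auto simp: Bset_eq Bplus_eq\<close>)
  then show ?thesis
    using card_Bplus k_less_n unfolding HB_V2_def HB_V1_def by simp
qed

lemma HB_V1_adj_Bplus: "X \<in> HB_V1 x n k \<Longrightarrow> {X, Bplus x n} \<in> HB_edges x n k"
  unfolding HB_edges_def using Bplus_in_HB_V2 dagger_id[of "Bplus x n"]
  by (auto simp: HB_V1_def)

lemma HB_V2_has_neighbour:
  assumes "Y \<in> HB_V2 x n k"
  obtains X where "X \<in> HB_V1 x n k" "{X, Y} \<in> HB_edges x n k"
proof -
  have D: "dagger Y \<subseteq> Bplus x n"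
    using assms dagger_subset_Bplus unfolding HB_V2_def by blast
  obtain X where "X \<subseteq> Bplus x n" "card X = k" "X \<subseteq> dagger Y \<or> dagger Y \<subseteq> X"
  proof (cases "k \<le> card (dagger Y)")
    case True
    then show ?thesis
      using that D by (meson obtain_subset_with_card_n order_trans)
  next
    case False
    then show ?thesis
      using that exists_subset_between[OF _ _ D finite_Bplus, of k] card_Bplus k_less_n
      by auto
  qed
  then show ?thesis
    using that assms unfolding HB_edges_def HB_V1_def by blast
qed

lemma HB_connected: "graph_connected (HB_vertices x n k) (HB_edges x n k)"
proof (rule graph_connected_if_reaches_hub)
  let ?R = "adj_rel (HB_edges x n k)"
  fix v assume "v \<in> HB_vertices x n k"
  then consider "v \<in> HB_V1 x n k" | "v \<in> HB_V2 x n k"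
    unfolding HB_vertices_def by blast
  then show "(v, Bplus x n) \<in> ?R\<^sup>*"
  proof cases
    case 1
    then show ?thesis
      by (intro HB_edge_reachable HB_V1_adj_Bplus)
  next
    case 2
    then obtain X where "X \<in> HB_V1 x n k" "{X, v} \<in> HB_edges x n k"
      by (rule HB_V2_has_neighbour)
    then have "(v, X) \<in> ?R\<^sup>*" "(X, Bplus x n) \<in> ?R\<^sup>*"
      by (auto intro: HB_edge_reachable HB_V1_adj_Bplus simp: insert_commute)
    then show ?thesis
      by (rule rtrancl_trans)
  qed
qed

definition initial_set :: "real set" where
  "initial_set = x ` {1..k}"

definition flipped_initial_set :: "real set" where
  "flipped_initial_set = insert (- x 1) (x ` {2..k})"

lemma initial_set_in_HB_V1: "initial_set \<in> HB_V1 x n k"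
proof -
  have "inj_on x {1..k}"
    using inj_on_x k_less_n by (auto intro: inj_on_subset)
  then show ?thesis
    using k_less_n unfolding HB_V1_def initial_set_def Bplus_eq by (auto simp: card_image)
qed

lemma card_initial_set: "card initial_set = k"
  using initial_set_in_HB_V1 unfolding HB_V1_def by simp

lemma dagger_flipped_initial_set: "dagger flipped_initial_set = initial_set"
proof -
  have "abs ` x ` {2..k} = x ` {2..k}"
    unfolding image_image using k_less_n by (intro image_cong) (auto intro!: abs_of_pos x_pos)
  moreover have "{1..k} = insert 1 {2..k}"
    using k_gt_1 by auto
  ultimately show ?thesis
    using x_1_pos unfolding dagger_def flipped_initial_set_def initial_set_def by simp
qed

lemma flipped_initial_set_not_positive: "\<not> flipped_initial_set \<subseteq> Bplus x n"
  unfolding flipped_initial_set_def using Bplus_pos x_1_pos by force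

lemma flipped_initial_set_in_HB_V2: "flipped_initial_set \<in> HB_V2 x n k"
proof -
  have card_flipped: "card flipped_initial_set = k"
  proof -
    have "inj_on x {2..k}"
      using inj_on_x k_less_n by (auto intro: inj_on_subset)
    moreover have "0 < x i" if "i \<in> {2..k}" for i
      using that k_less_n by (intro x_pos) auto
    then have "- x 1 \<notin> x ` {2..k}"
      using x_1_pos by force
    ultimately show ?thesis
      using k_gt_1 unfolding flipped_initial_set_def by (simp add: card_image)
  qed
  have "flipped_initial_set \<in> phiB x n"
  proof (rule phiB_memI[where m = k])
    have "finite flipped_initial_set"
      by (simp add: flipped_initial_set_def)
    then show "inj_on abs flipped_initial_set"
      using card_flipped dagger_flipped_initial_set card_initial_set
      unfolding dagger_def by (simp add: inj_on_iff_eq_card)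
    show "dagger flipped_initial_set \<subseteq> x ` {1..k}"
      using dagger_flipped_initial_set unfolding initial_set_def by simp
  qed (use k_gt_1 k_less_n in \<open>auto simp: flipped_initial_set_def Bset_eq Bplus_eq\<close>)
  then show ?thesis
    using flipped_initial_set_not_positive unfolding HB_V2_def HB_V1_def by simp
qed

lemma initial_edge: "{initial_set, flipped_initial_set} \<in> HB_edges x n k"
  unfolding HB_edges_def
  using initial_set_in_HB_V1 flipped_initial_set_in_HB_V2 dagger_flipped_initial_set by blast

lemma edge_at_flipped_initial_set:
  assumes "e \<in> HB_edges x n k" "flipped_initial_set \<in> e"
  shows "e = {initial_set, flipped_initial_set}"
proof -
  obtain X Y where e: "e = {X, Y}" "X \<in> HB_V1 x n k" "Y \<in> HB_V2 x n k"
    and inc: "X \<subseteq> dagger Y \<or> dagger Y \<subseteq> X"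
    using assms(1) unfolding HB_edges_def by blast
  have "flipped_initial_set \<noteq> X"
    using e(2) flipped_initial_set_not_positive unfolding HB_V1_def by auto
  then have Y: "Y = flipped_initial_set"
    using assms(2) e(1) by auto
  have "finite X" "card X = k"
    using e(2) finite_Bplus unfolding HB_V1_def by (auto intro: finite_subset)
  then have "X = initial_set"
    using inc card_initial_set unfolding Y dagger_flipped_initial_set initial_set_def
    by (metis card_subset_eq finite_imageI finite_atLeastAtMost)
  then show ?thesis
    using e(1) Y by simp
qed

lemma initial_edge_is_bridge:
  "\<not> graph_connected (HB_vertices x n k) (HB_edges x n k - {{initial_set, flipped_initial_set}})"
proof (rule not_graph_connected_if_isolated)
  show "flipped_initial_set \<in> HB_vertices x n k" "Bplus x n \<in> HB_vertices x n k"
    using flipped_initial_set_in_HB_V2 Bplus_in_HB_V2 unfolding HB_vertices_def by auto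
  show "flipped_initial_set \<noteq> Bplus x n"
    using flipped_initial_set_not_positive by auto
qed (use edge_at_flipped_initial_set in blast)

end

theorem mainTheorem7:
  fixes x :: "nat \<Rightarrow> real" and n k :: nat
  assumes "3 \<le> n" and "1 < k" and "k < n"
    and "0 < x 1"
    and "\<And>i j. 1 \<le> i \<Longrightarrow> i < j \<Longrightarrow> j \<le> n \<Longrightarrow> x i < x j"
  shows "edge_connectivity (HB_vertices x n k) (HB_edges x n k) = 1"
proof -
  interpret kneser_B_setup x n k
    using assms(2-5) by unfold_locales \<comment> \<open>\<open>3 \<le> n\<close> is implied by \<open>1 < k < n\<close>\<close>
  show ?thesis
    using finite_HB_edges HB_connected initial_edge initial_edge_is_bridge
    by (rule edge_connectivity_eq_1I)
qed

end
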